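(* Let $\epsilon \in (0, 1/2]$ and consider the stochastic process $X_0 = 0$ and, for $t \ge 1$, $X_t = X_{t-1} + x_t - \left(\frac{1}{2} + \epsilon\cdot \mathrm{sgn}(X_{t-1})\right)$, where $x_1, x_2, \ldots$ are independent $\mathrm{Bernoulli}(1/2)$ random variables. Then for every integer $t \ge 0$ and every $\Delta \ge 0$, $\Pr[|X_t| \ge \Delta] \le e^{1/2}\cdot e^{-\epsilon\Delta}$.
   Context: $\mathrm{sgn}(0) = 0$, $\mathrm{sgn}(y)=1$ for $y>0$, $\mathrm{sgn}(y) = -1$ for $y<0$. *)

theory Defs
  imports "HOL-Probability.Probability"
begin

text \<open>The process X_0 = 0, X_t = X_{t-1} + x_t - (1/2 + eps * sgn X_{t-1}).
  Here x :: nat => 'a => real gives the coin x_t at outcome w (indices t >= 1).\<close>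
fun proc :: "real \<Rightarrow> (nat \<Rightarrow> 'a \<Rightarrow> real) \<Rightarrow> nat \<Rightarrow> 'a \<Rightarrow> real" where
  "proc eps x 0 w = 0"
| "proc eps x (Suc t) w =
     proc eps x t w + x (Suc t) w - (1/2 + eps * sgn (proc eps x t w))"

end

theory Submission
  imports Defs
begin

text \<open>
  Induction on \<open>t\<close>, for all \<open>\<Delta>\<close> at once. For \<open>\<Delta> \<le> 1\<close> the bound exceeds 1. For \<open>\<Delta> > 1\<close>,
  the event \<open>|X(t+1)| \<ge> \<Delta>\<close> forces \<open>X(t) \<noteq> 0\<close>, and the fresh coin, which is independent
  of \<open>X(t)\<close>, either pushes \<open>X(t)\<close> outwards by \<open>1/2 - \<epsilon>\<close> (so \<open>|X(t)| \<ge> \<Delta> - 1/2 + \<epsilon>\<close>) or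
  inwards by \<open>1/2 + \<epsilon>\<close> (so \<open>|X(t)| \<ge> \<Delta> + 1/2 + \<epsilon>\<close>), each with probability 1/2. Hence
  \<open>P(|X(t+1)| \<ge> \<Delta>) \<le> (P(|X(t)| \<ge> \<Delta> - 1/2 + \<epsilon>) + P(|X(t)| \<ge> \<Delta> + 1/2 + \<epsilon>)) / 2\<close>,
  and the bound \<open>exp (1/2) * exp (- \<epsilon> * \<Delta>)\<close> survives this averaging because
  \<open>exp (\<epsilon> (1/2 - \<epsilon>)) + exp (- \<epsilon> (1/2 + \<epsilon>)) = 2 exp (- \<epsilon>\<^sup>2) cosh (\<epsilon>/2) \<le> 2\<close>.
\<close>

lemma exp_plus_exp_minus_le:
  fixes u :: real
  assumes "\<bar>u\<bar> \<le> 1"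
  shows "exp u + exp (- u) \<le> 2 * exp (u\<^sup>2)"
proof -
  have exp_neg: "exp (- v) \<le> 1 - v + v\<^sup>2" if "0 \<le> v" for v :: real
  proof -
    have "1 \<le> (1 + v) * (1 - v + v\<^sup>2)"
      using that by (simp add: algebra_simps power2_eq_square)
    then have "inverse (1 + v) \<le> 1 - v + v\<^sup>2"
      using that by (simp add: field_simps)
    moreover have "exp (- v) \<le> inverse (1 + v)"
      using that by (simp add: exp_minus le_imp_inverse_le)
    ultimately show ?thesis
      by linarith
  qed
  have "exp \<bar>u\<bar> + exp (- \<bar>u\<bar>) \<le> 2 * (1 + u\<^sup>2)"
    using exp_bound[of "\<bar>u\<bar>"] exp_neg[of "\<bar>u\<bar>"] assms by simp
  also have "\<dots> \<le> 2 * exp (u\<^sup>2)"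
    by (intro mult_left_mono exp_ge_add_one_self) simp
  finally show ?thesis
    by (cases "0 \<le> u") (simp_all add: add.commute)
qed

lemma exp_drift_sum_le:
  fixes e :: real
  assumes "\<bar>e\<bar> \<le> 2"
  shows "exp (e * (1/2 - e)) + exp (- (e * (1/2 + e))) \<le> 2"
proof -
  have "exp (e * (1/2 - e)) + exp (- (e * (1/2 + e))) = exp (- e\<^sup>2) * (exp (e/2) + exp (- (e/2)))"
    by (simp add: algebra_simps power2_eq_square flip: exp_add)
  also have "\<dots> \<le> exp (- e\<^sup>2) * (2 * exp ((e/2)\<^sup>2))"
    using exp_plus_exp_minus_le[of "e/2"] assms by simp
  also have "\<dots> = 2 * exp (- (3/4) * e\<^sup>2)"
    by (simp add: power_divide flip: exp_add)
  also have "\<dots> \<le> 2"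
    by simp
  finally show ?thesis .
qed

lemma drift_step_tail_cases:
  fixes X c eps \<Delta> :: real
  assumes "c \<in> {0, 1}" "eps \<le> 1/2" "1 < \<Delta>"
    and "\<Delta> \<le> \<bar>X + c - (1/2 + eps * sgn X)\<bar>"
  shows "c = 1 \<and> X \<in> {\<Delta> - (1/2 - eps)..} \<union> {..- (\<Delta> + (1/2 + eps))}
       \<or> c = 0 \<and> X \<in> {\<Delta> + (1/2 + eps)..} \<union> {..- (\<Delta> - (1/2 - eps))}"
  using assms by (cases X "0::real" rule: linorder_cases) (auto simp: abs_if split: if_split_asm)

lemma (in prob_space) prob_fair_coin_choice:
  fixes X c :: "'a \<Rightarrow> real"
  assumes indep: "indep_var borel X borel c"
    and coin: "AE w in M. c w \<in> {0, 1}" "prob {w \<in> space M. c w = 1} = 1/2"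
    and sets: "A0 \<in> sets borel" "A1 \<in> sets borel"
  shows "prob {w \<in> space M. c w = 1 \<and> X w \<in> A1 \<or> c w = 0 \<and> X w \<in> A0}
       = (prob {w \<in> space M. X w \<in> A1} + prob {w \<in> space M. X w \<in> A0}) / 2"
proof -
  have [measurable]: "X \<in> borel_measurable M" "c \<in> borel_measurable M"
    using indep_var_rv1[OF indep] indep_var_rv2[OF indep] by simp_all
  have "prob {w \<in> space M. c w = 0} = prob (space M - {w \<in> space M. c w = 1})"
    using coin(1) by (intro finite_measure_eq_AE) (auto elim!: eventually_mono)
  also have "\<dots> = 1/2"
    using coin(2) by (subst prob_compl) auto
  finally have coin0: "prob {w \<in> space M. c w = 0} = 1/2" .
  have "prob {w \<in> space M. X w \<in> A1 \<and> c w \<in> {1}} = prob {w \<in> space M. X w \<in> A1} / 2"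
    using prob_indep_random_variable[OF indep sets(2), of "{1}"] coin(2) by simp
  moreover have "prob {w \<in> space M. X w \<in> A0 \<and> c w \<in> {0}} = prob {w \<in> space M. X w \<in> A0} / 2"
    using prob_indep_random_variable[OF indep sets(1), of "{0}"] coin0 by simp
  moreover have "prob {w \<in> space M. c w = 1 \<and> X w \<in> A1 \<or> c w = 0 \<and> X w \<in> A0}
      = prob {w \<in> space M. X w \<in> A1 \<and> c w \<in> {1}} + prob {w \<in> space M. X w \<in> A0 \<and> c w \<in> {0}}"
    using sets by (subst finite_measure_Union[symmetric]) (auto intro!: arg_cong[where f = prob])
  ultimately show ?thesis
    by simp
qed

lemma proc_cong:
  "(\<And>i. i \<in> {1..t} \<Longrightarrow> x i w = y i v) \<Longrightarrow> proc eps x t w = proc eps y t v"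
  by (induction t) auto

text \<open>Running \<open>proc\<close> on the one-point sample space reads the coins off a path \<open>\<omega>\<close>; this exhibits
  \<open>X\<^sub>t\<close> as a measurable function of \<open>x\<^sub>1, \<dots>, x\<^sub>t\<close>.\<close>

lemma measurable_proc_path:
  assumes "{1..t} \<subseteq> I"
  shows "(\<lambda>\<omega>. proc eps (\<lambda>i _. \<omega> i) t ()) \<in> borel_measurable (PiM I (\<lambda>_. borel))"
  using assms
proof (induction t)
  case (Suc t)
  then have "{1..t} \<subseteq> I" "Suc t \<in> I"
    by auto
  with Suc.IH have "(\<lambda>\<omega>. proc eps (\<lambda>i _. \<omega> i) t ()) \<in> borel_measurable (PiM I (\<lambda>_. borel))"
    and "(\<lambda>\<omega>. \<omega> (Suc t)) \<in> borel_measurable (PiM I (\<lambda>_. borel))"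
    by (auto intro: measurable_component_singleton)
  then show ?case
    unfolding proc.simps by measurable
qed simp

locale drift_walk = prob_space M
  for M :: "'a measure" and x :: "nat \<Rightarrow> 'a \<Rightarrow> real" and eps :: real +
  assumes indep_coins: "indep_vars (\<lambda>_. borel) x {1..}"
    and coin_values: "\<And>i. i \<ge> 1 \<Longrightarrow> AE w in M. x i w \<in> {0, 1}"
    and coin_fair: "\<And>i. i \<ge> 1 \<Longrightarrow> prob {w \<in> space M. x i w = 1} = 1/2"
    and eps_pos: "0 < eps" and eps_le_half: "eps \<le> 1/2"
begin

lemma indep_var_proc_coin: "indep_var borel (proc eps x t) borel (x (Suc t))"
proof -
  let ?past = "\<lambda>w. restrict (\<lambda>i. x i w) {1..t}" and ?now = "\<lambda>w. restrict (\<lambda>i. x i w) {Suc t}"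
  have "indep_var (PiM {1..t} (\<lambda>_. borel)) ?past (PiM {Suc t} (\<lambda>_. borel)) ?now"
    by (rule indep_var_restrict[OF indep_coins]) auto
  then have "indep_var borel ((\<lambda>\<omega>. proc eps (\<lambda>i _. \<omega> i) t ()) \<circ> ?past) borel ((\<lambda>\<omega>. \<omega> (Suc t)) \<circ> ?now)"
    by (rule indep_var_compose) (auto intro: measurable_proc_path measurable_component_singleton)
  moreover have "(\<lambda>\<omega>. proc eps (\<lambda>i _. \<omega> i) t ()) \<circ> ?past = proc eps x t"
    by (auto simp: fun_eq_iff intro!: proc_cong)
  ultimately show ?thesis
    by (simp add: comp_def)
qed

lemma prob_tail_step:
  assumes "1 < \<Delta>"
  shows "prob {w \<in> space M. \<Delta> \<le> \<bar>proc eps x (Suc t) w\<bar>}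
       \<le> (prob {w \<in> space M. \<Delta> - (1/2 - eps) \<le> \<bar>proc eps x t w\<bar>}
          + prob {w \<in> space M. \<Delta> + (1/2 + eps) \<le> \<bar>proc eps x t w\<bar>}) / 2"
proof -
  define a b where "a = \<Delta> - (1/2 - eps)" and "b = \<Delta> + (1/2 + eps)"
  define A1 A0 where "A1 = {a..} \<union> {..-b}" and "A0 = {b..} \<union> {..-a}"
  let ?X = "proc eps x t" and ?c = "x (Suc t)"
  have indep: "indep_var borel ?X borel ?c"
    by (rule indep_var_proc_coin)
  have [measurable]: "?X \<in> borel_measurable M" "?c \<in> borel_measurable M"
    using indep_var_rv1[OF indep] indep_var_rv2[OF indep] by simp_all
  have "0 < a" "a \<le> b"
    using assms eps_pos eps_le_half by (simp_all add: a_def b_def)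
  then have "{w \<in> space M. ?X w \<in> A1} \<union> {w \<in> space M. ?X w \<in> A0} = {w \<in> space M. a \<le> \<bar>?X w\<bar>}"
    and "{w \<in> space M. ?X w \<in> A1} \<inter> {w \<in> space M. ?X w \<in> A0} = {w \<in> space M. b \<le> \<bar>?X w\<bar>}"
    by (auto simp: A1_def A0_def)
  then have regroup: "prob {w \<in> space M. ?X w \<in> A1} + prob {w \<in> space M. ?X w \<in> A0}
      = prob {w \<in> space M. a \<le> \<bar>?X w\<bar>} + prob {w \<in> space M. b \<le> \<bar>?X w\<bar>}"
    using measure_Un3[of "{w \<in> space M. ?X w \<in> A1}" M "{w \<in> space M. ?X w \<in> A0}"]
    by (simp add: fmeasurable_eq_sets A1_def A0_def)
  have "prob {w \<in> space M. \<Delta> \<le> \<bar>proc eps x (Suc t) w\<bar>}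
      \<le> prob {w \<in> space M. ?c w = 1 \<and> ?X w \<in> A1 \<or> ?c w = 0 \<and> ?X w \<in> A0}"
  proof (rule finite_measure_mono_AE)
    show "AE w in M. w \<in> {w \<in> space M. \<Delta> \<le> \<bar>proc eps x (Suc t) w\<bar>}
        \<longrightarrow> w \<in> {w \<in> space M. ?c w = 1 \<and> ?X w \<in> A1 \<or> ?c w = 0 \<and> ?X w \<in> A0}"
      using coin_values[of "Suc t"] drift_step_tail_cases[OF _ eps_le_half assms]
      by (auto simp: A1_def A0_def a_def b_def elim!: eventually_mono)
    show "{w \<in> space M. ?c w = 1 \<and> ?X w \<in> A1 \<or> ?c w = 0 \<and> ?X w \<in> A0} \<in> sets M"
      by (simp add: A1_def A0_def)
  qed
  also have "\<dots> = (prob {w \<in> space M. ?X w \<in> A1} + prob {w \<in> space M. ?X w \<in> A0}) / 2"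
    using coin_values coin_fair by (intro prob_fair_coin_choice[OF indep]) (auto simp: A1_def A0_def)
  finally show ?thesis
    by (simp add: regroup a_def b_def)
qed

lemma prob_le_tail_bound:
  assumes "\<Delta> \<le> 1"
  shows "prob A \<le> exp (1/2) * exp (- eps * \<Delta>)"
proof -
  have "eps * \<Delta> \<le> eps"
    using mult_left_mono[OF assms, of eps] eps_pos by simp
  then have "1 \<le> exp (1/2) * exp (- eps * \<Delta>)"
    using eps_le_half by (simp flip: exp_add)
  then show ?thesis
    using prob_le_1 by (rule order_trans[rotated])
qed

lemma prob_tail_bound:
  "prob {w \<in> space M. \<Delta> \<le> \<bar>proc eps x t w\<bar>} \<le> exp (1/2) * exp (- eps * \<Delta>)"
proof (induction t arbitrary: \<Delta>)
  case 0
  show ?case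
  proof (cases "\<Delta> \<le> 1")
    case False
    then show ?thesis
      by simp
  qed (rule prob_le_tail_bound)
next
  case (Suc t)
  show ?case
  proof (cases "\<Delta> \<le> 1")
    case False
    then have "1 < \<Delta>"
      by simp
    let ?K = "exp (1/2) * exp (- eps * \<Delta>)"
    have "prob {w \<in> space M. \<Delta> \<le> \<bar>proc eps x (Suc t) w\<bar>}
        \<le> (prob {w \<in> space M. \<Delta> - (1/2 - eps) \<le> \<bar>proc eps x t w\<bar>}
           + prob {w \<in> space M. \<Delta> + (1/2 + eps) \<le> \<bar>proc eps x t w\<bar>}) / 2"
      using \<open>1 < \<Delta>\<close> by (rule prob_tail_step)
    also have "\<dots> \<le> (exp (1/2) * exp (- eps * (\<Delta> - (1/2 - eps)))
        + exp (1/2) * exp (- eps * (\<Delta> + (1/2 + eps)))) / 2"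
      by (intro divide_right_mono add_mono Suc.IH) simp
    also have "\<dots> = ?K * (exp (eps * (1/2 - eps)) + exp (- (eps * (1/2 + eps)))) / 2"
      by (simp add: algebra_simps flip: exp_add)
    also have "\<dots> \<le> ?K"
      using exp_drift_sum_le[of eps] eps_pos eps_le_half by simp
    finally show ?thesis .
  qed (rule prob_le_tail_bound)
qed

end

theorem lemma7:
  fixes M :: "'a measure" and x :: "nat \<Rightarrow> 'a \<Rightarrow> real"
    and eps :: real and t :: nat and \<Delta> :: real
  assumes "prob_space M"
    and "prob_space.indep_vars M (\<lambda>_. borel) x {1..}"
    and "\<And>i. i \<ge> 1 \<Longrightarrow> x i \<in> borel_measurable M"
    and "\<And>i. i \<ge> 1 \<Longrightarrow> AE w in M. x i w \<in> {0, 1}"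
    and "\<And>i. i \<ge> 1 \<Longrightarrow> measure M {w \<in> space M. x i w = 1} = 1/2"
    and "0 < eps" and "eps \<le> 1/2"
    and "\<Delta> \<ge> 0"
  shows "measure M {w \<in> space M. \<bar>proc eps x t w\<bar> \<ge> \<Delta>}
           \<le> exp (1/2) * exp (- eps * \<Delta>)"
proof -
  \<comment> \<open>Measurability of the coins is already part of their independence, and the bound holds for every \<open>\<Delta>\<close>.\<close>
  interpret prob_space M
    by fact
  interpret drift_walk M x eps
    by standard (use assms(2,4-7) in auto)
  show ?thesis
    by (rule prob_tail_bound)
qed

end
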